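(* Let $\Omega$ be a set, let $\Phi$ be the family consisting of all coherent sets of gambles on $\Omega$ together with $\mathcal{L}(\Omega)$, and let $At(\Phi)$ be its set of atoms (maximal coherent sets). For all $M,M'\in At(\Phi)$ and every $x\in Q$, $$M\equiv_x M' \iff \epsilon_x(M)=\epsilon_x(M') \iff M,M'\in At(\epsilon_x(M)).$$ Consequently, for all $x,y\in Q$: $At_x\le At_y$ if and only if $At(\epsilon_x(M))\supseteq At(\epsilon_y(M))$ for every $M\in At(\Phi)$.
   Context: A gamble on $\Omega$ is a bounded function $f:\Omega\to\mathbb{R}$; $\mathcal{L}(\Omega)$ is the set of all gambles and $\mathcal{L}^+(\Omega)=\{f\in\mathcal{L}(\Omega): f\ge 0, f\ne 0\}$. A set $\mathcal{D}\subseteq\mathcal{L}(\Omega)$ is coherent if (D1) $\mathcal{L}^+(\Omega)\subseteq\mathcal{D}$, (D2) $0\notin\mathcal{D}$, (D3) $f,g\in\mathcal{D}\Rightarrow f+g\in\mathcal{D}$, (D4) $f\in\mathcal{D},\lambda>0\Rightarrow\lambda f\in\mathcal{D}$. $\Phi$ is the set of coherent sets together with $\mathcal{L}(\Omega)$; for $\mathcal{K}\subseteq\mathcal{L}(\Omega)$ put $\mathcal{C}(\mathcal{K})=\bigcap\{\mathcal{D}\in\Phi:\mathcal{K}\subseteq\mathcal{D}\}$. Questions: $Q$ is an index set, each $x\in Q$ corresponds to a partition $\mathcal{P}_x$ of $\Omega$ (equivalence relation $\equiv_x$), and $\{\mathcal{P}_x:x\in Q\}$ is closed under join, where partitions are ordered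 by $\mathcal{P}_x\le\mathcal{P}_y$ iff every block of $\mathcal{P}_y$ is contained in a block of $\mathcal{P}_x$, and the join is the partition of nonempty intersections of blocks. A gamble is $x$-measurable if it is constant on each block of $\mathcal{P}_x$; $\mathcal{L}_x$ denotes the set of $x$-measurable gambles. Extraction: $\epsilon_x(\mathcal{D})=\mathcal{C}(\mathcal{D}\cap\mathcal{L}_x)$ for $\mathcal{D}\in\Phi$. Atoms of $\Phi$ are the maximal coherent sets (coherent sets not properly contained in another coherent set); $At(\Phi)$ denotes the set of all of them, and for $\mathcal{D}\in\Phi$, $At(\mathcal{D})=\{M\in At(\Phi):\mathcal{D}\subseteq M\}$. For $x\in Q$, the sets $At(\epsilon_x(M))$, $M\in At(\Phi)$, form a partition $At_x$ of $At(\Phi)$ (known from prior work); $M\equiv_x M'$ means $M$ and $M'$ lie in the same block of $At_x$, i.e. there is $M''\in At(\Phi)$ with $M,M'\in At(\epsilon_x(M''))$. Partitions of $At(\Phi)$ are ordered by $At_x\le At_y$ iff $M\equiv_y M'$ implies $M\equiv_x M'$ for all $M,M'\in At(\Phi)$. *)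

theory Defs
  imports Complex_Main
begin

text \<open>Gambles on the type 'a (playing the role of Omega): bounded real functions.\<close>
definition gambles :: "('a \<Rightarrow> real) set" where
  "gambles = {f. \<exists>B. \<forall>w. \<bar>f w\<bar> \<le> B}"

definition pos_gambles :: "('a \<Rightarrow> real) set" where
  "pos_gambles = {f \<in> gambles. (\<forall>w. f w \<ge> 0) \<and> f \<noteq> (\<lambda>_. 0)}"

definition coherent :: "('a \<Rightarrow> real) set \<Rightarrow> bool" where
  "coherent D \<longleftrightarrow> D \<subseteq> gambles \<and>
     pos_gambles \<subseteq> D \<and>
     (\<lambda>_. 0) \<notin> D \<and>
     (\<forall>f\<in>D. \<forall>g\<in>D. (\<lambda>w. f w + g w) \<in> D) \<and>
     (\<forall>f\<in>D. \<forall>c::real. c > 0 \<longrightarrow> (\<lambda>w. c * f w) \<in> D)"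

definition Phi :: "('a \<Rightarrow> real) set set" where
  "Phi = {D. coherent D} \<union> {gambles}"

definition closure_C :: "('a \<Rightarrow> real) set \<Rightarrow> ('a \<Rightarrow> real) set" where
  "closure_C K = \<Inter>{D \<in> Phi. K \<subseteq> D}"

text \<open>Questions: each x is associated with an equivalence relation part x on Omega
  (whose classes are the blocks of the partition P_x).\<close>
definition questions :: "'q set \<Rightarrow> ('q \<Rightarrow> ('a \<times> 'a) set) \<Rightarrow> bool" where
  "questions Q part \<longleftrightarrow>
     (\<forall>x\<in>Q. equiv UNIV (part x)) \<and>
     (\<forall>x\<in>Q. \<forall>y\<in>Q. \<exists>z\<in>Q. part z = part x \<inter> part y)"

definition measurable_gambles :: "('a \<times> 'a) set \<Rightarrow> ('a \<Rightarrow> real) set" where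
  "measurable_gambles R = {f \<in> gambles. \<forall>w w'. (w, w') \<in> R \<longrightarrow> f w = f w'}"

definition extraction :: "('a \<times> 'a) set \<Rightarrow> ('a \<Rightarrow> real) set \<Rightarrow> ('a \<Rightarrow> real) set" where
  "extraction R D = closure_C (D \<inter> measurable_gambles R)"

definition atoms :: "('a \<Rightarrow> real) set set" where
  "atoms = {M. coherent M \<and> (\<forall>D. coherent D \<and> M \<subseteq> D \<longrightarrow> D = M)}"

definition atoms_of :: "('a \<Rightarrow> real) set \<Rightarrow> ('a \<Rightarrow> real) set set" where
  "atoms_of D = {M \<in> atoms. D \<subseteq> M}"

definition atom_equiv :: "('a \<times> 'a) set \<Rightarrow> ('a \<Rightarrow> real) set \<Rightarrow> ('a \<Rightarrow> real) set \<Rightarrow> bool" where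
  "atom_equiv R M M' \<longleftrightarrow> (\<exists>M''\<in>atoms. M \<in> atoms_of (extraction R M'') \<and> M' \<in> atoms_of (extraction R M''))"

definition atoms_partition_le :: "('a \<times> 'a) set \<Rightarrow> ('a \<times> 'a) set \<Rightarrow> bool" where
  "atoms_partition_le Rx Ry \<longleftrightarrow>
     (\<forall>M\<in>atoms. \<forall>M'\<in>atoms. atom_equiv Ry M M' \<longrightarrow> atom_equiv Rx M M')"

end

theory Submission
  imports Defs
begin

text \<open>A maximal coherent set M decides every nonzero gamble f: it contains f or -f, since
  otherwise the cone generated by M and f would be a strictly larger coherent set.
  If \<open>\<epsilon>\<^sub>x(M) \<subseteq> M'\<close> for another maximal M', then every x-measurable gamble f of M' lies in M:
  otherwise -f, which is x-measurable as well, lies in M and hence in M', and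
  f + (-f) = 0 \<in> M'. So M and M' contain the same x-measurable gambles and have the same
  extraction.\<close>

lemma gambles_zero: "(\<lambda>_. 0) \<in> gambles"
  by (auto simp: gambles_def)

lemma gambles_add: "f \<in> gambles \<Longrightarrow> g \<in> gambles \<Longrightarrow> (\<lambda>w. f w + g w) \<in> gambles"
proof -
  assume "f \<in> gambles" "g \<in> gambles"
  then obtain B C where "\<forall>w. \<bar>f w\<bar> \<le> B" "\<forall>w. \<bar>g w\<bar> \<le> C"
    by (auto simp: gambles_def)
  then have "\<forall>w. \<bar>f w + g w\<bar> \<le> B + C"
    by (meson abs_triangle_ineq add_mono order_trans)
  then show ?thesis by (auto simp: gambles_def)
qed

lemma gambles_scale: "f \<in> gambles \<Longrightarrow> (\<lambda>w. c * f w) \<in> gambles"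
proof -
  assume "f \<in> gambles"
  then obtain B where "\<forall>w. \<bar>f w\<bar> \<le> B" by (auto simp: gambles_def)
  then have "\<forall>w. \<bar>c * f w\<bar> \<le> \<bar>c\<bar> * B" by (simp add: abs_mult mult_left_mono)
  then show ?thesis by (auto simp: gambles_def)
qed

lemma gambles_uminus: "f \<in> gambles \<Longrightarrow> (\<lambda>w. - f w) \<in> gambles"
  using gambles_scale[of f "-1"] by simp

lemma measurable_gambles_uminus:
  "f \<in> measurable_gambles R \<Longrightarrow> (\<lambda>w. - f w) \<in> measurable_gambles R"
  by (simp add: measurable_gambles_def gambles_uminus)

lemma coherentD:
  assumes "coherent D"
  shows "D \<subseteq> gambles" "pos_gambles \<subseteq> D" "(\<lambda>_. 0) \<notin> D"
    "f \<in> D \<Longrightarrow> g \<in> D \<Longrightarrow> (\<lambda>w. f w + g w) \<in> D"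
    "f \<in> D \<Longrightarrow> c > 0 \<Longrightarrow> (\<lambda>w. c * f w) \<in> D"
  using assms by (auto simp: coherent_def)

lemma coherent_add_insert_zero:
  "coherent D \<Longrightarrow> f \<in> insert (\<lambda>_. 0) D \<Longrightarrow> g \<in> insert (\<lambda>_. 0) D \<Longrightarrow>
    (\<lambda>w. f w + g w) \<in> insert (\<lambda>_. 0) D"
  using coherentD(4) by auto

lemma coherent_scale_insert_zero:
  "coherent D \<Longrightarrow> f \<in> insert (\<lambda>_. 0) D \<Longrightarrow> c > 0 \<Longrightarrow>
    (\<lambda>w. c * f w) \<in> insert (\<lambda>_. 0) D"
  using coherentD(5) by auto

definition adjoin :: "('a \<Rightarrow> real) set \<Rightarrow> ('a \<Rightarrow> real) \<Rightarrow> ('a \<Rightarrow> real) set" where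
  "adjoin D f = D \<union> {\<lambda>w. c * f w + g w | c g. c > 0 \<and> g \<in> insert (\<lambda>_. 0) D}"

lemma adjoin_cases:
  assumes "h \<in> adjoin D f"
  obtains "h \<in> D"
  | c g where "c > 0" "g \<in> insert (\<lambda>_. 0) D" "h = (\<lambda>w. c * f w + g w)"
  using assms unfolding adjoin_def by blast

lemma adjoinI:
  "c > 0 \<Longrightarrow> g \<in> insert (\<lambda>_. 0) D \<Longrightarrow> (\<lambda>w. c * f w + g w) \<in> adjoin D f"
  unfolding adjoin_def by (intro UnI2 CollectI exI conjI) auto

lemma mem_adjoin: "f \<in> adjoin D f"
  using adjoinI[of 1 "\<lambda>_. 0" D f] by simp

lemma subset_adjoin: "D \<subseteq> adjoin D f"
  unfolding adjoin_def by blast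

lemma adjoin_subset_gambles:
  assumes "D \<subseteq> gambles" "f \<in> gambles"
  shows "adjoin D f \<subseteq> gambles"
  using assms gambles_zero gambles_add gambles_scale unfolding adjoin_def by blast

lemma zero_notin_adjoin:
  assumes D: "coherent D" and f0: "f \<noteq> (\<lambda>_. 0)" and uminus_f: "(\<lambda>w. - f w) \<notin> D"
  shows "(\<lambda>_. 0) \<notin> adjoin D f"
proof
  assume "(\<lambda>_. 0) \<in> adjoin D f"
  then obtain c g where c: "c > 0" and g: "g \<in> insert (\<lambda>_. 0) D"
    and sum0: "(\<lambda>_. 0) = (\<lambda>w. c * f w + g w)"
    using coherentD(3)[OF D] by (cases rule: adjoin_cases) auto
  have "(\<lambda>w. (1 / c) * g w) = (\<lambda>w. - f w)"
  proof
    fix w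
    have "g w = - (c * f w)"
      using fun_cong[OF sum0, of w] by linarith
    then show "(1 / c) * g w = - f w"
      using c by simp
  qed
  moreover have "(\<lambda>w. (1 / c) * g w) \<in> insert (\<lambda>_. 0) D"
    by (rule coherent_scale_insert_zero[OF D g]) (use c in simp)
  ultimately have "(\<lambda>w. - f w) = (\<lambda>_. 0)"
    using uminus_f by auto
  then show False
    using f0 by (metis add.inverse_neutral minus_minus)
qed

lemma adjoin_add_insert_zero:
  assumes D: "coherent D" and h: "h \<in> adjoin D f" and g: "g \<in> insert (\<lambda>_. 0) D"
  shows "(\<lambda>w. h w + g w) \<in> adjoin D f"
  using h
proof (cases rule: adjoin_cases)
  case 1
  then have "(\<lambda>w. h w + g w) \<in> D"
    using g coherentD(4)[OF D] by auto
  then show ?thesis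
    using subset_adjoin by blast
next
  case (2 c g')
  have "(\<lambda>w. h w + g w) = (\<lambda>w. c * f w + (g' w + g w))"
    using 2 by (simp add: add.assoc)
  moreover have "(\<lambda>w. g' w + g w) \<in> insert (\<lambda>_. 0) D"
    using coherent_add_insert_zero[OF D \<open>g' \<in> _\<close> g] .
  ultimately show ?thesis
    using adjoinI[OF \<open>c > 0\<close>] by simp
qed

lemma adjoin_add:
  assumes D: "coherent D" and a: "a \<in> adjoin D f" and b: "b \<in> adjoin D f"
  shows "(\<lambda>w. a w + b w) \<in> adjoin D f"
  using b
proof (cases rule: adjoin_cases)
  case 1
  then show ?thesis
    using adjoin_add_insert_zero[OF D a] by blast
next
  case b_eq: (2 c g)
  show ?thesis
    using a
  proof (cases rule: adjoin_cases)
    case 1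
    then have "(\<lambda>w. b w + a w) \<in> adjoin D f"
      using adjoin_add_insert_zero[OF D b] by blast
    then show ?thesis
      by (simp add: add.commute)
  next
    case a_eq: (2 c' g')
    have sum: "(\<lambda>w. a w + b w) = (\<lambda>w. (c' + c) * f w + (g' w + g w))"
      unfolding a_eq(3) b_eq(3) by (simp add: algebra_simps)
    have "c' + c > 0"
      using a_eq(1) b_eq(1) by simp
    then show ?thesis
      unfolding sum by (rule adjoinI[OF _ coherent_add_insert_zero[OF D a_eq(2) b_eq(2)]])
  qed
qed

lemma adjoin_scale:
  assumes D: "coherent D" and h: "h \<in> adjoin D f" and c: "c > 0"
  shows "(\<lambda>w. c * h w) \<in> adjoin D f"
  using h
proof (cases rule: adjoin_cases)
  case 1
  then show ?thesis
    using coherentD(5)[OF D 1 c] subset_adjoin by blast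
next
  case (2 d g)
  have scaled: "(\<lambda>w. c * h w) = (\<lambda>w. (c * d) * f w + c * g w)"
    unfolding 2(3) by (simp add: algebra_simps)
  have "c * d > 0"
    using c 2(1) by simp
  then show ?thesis
    unfolding scaled by (rule adjoinI[OF _ coherent_scale_insert_zero[OF D 2(2) c]])
qed

lemma coherent_adjoin:
  assumes "coherent D" "f \<in> gambles" "f \<noteq> (\<lambda>_. 0)" "(\<lambda>w. - f w) \<notin> D"
  shows "coherent (adjoin D f)"
  unfolding coherent_def
proof (intro conjI ballI allI impI)
  show "adjoin D f \<subseteq> gambles"
    using adjoin_subset_gambles[OF coherentD(1)] assms by blast
  show "pos_gambles \<subseteq> adjoin D f"
    using coherentD(2)[OF assms(1)] subset_adjoin by blast
  show "(\<lambda>_. 0) \<notin> adjoin D f"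
    using zero_notin_adjoin assms by blast
qed (simp_all add: adjoin_add adjoin_scale assms(1))

lemma atoms_coherent: "M \<in> atoms \<Longrightarrow> coherent M"
  by (simp add: atoms_def)

lemma atoms_subset_Phi: "atoms \<subseteq> Phi"
  by (auto simp: atoms_def Phi_def)

lemma atom_mem_or_uminus_mem:
  assumes M: "M \<in> atoms" and f: "f \<in> gambles" "f \<noteq> (\<lambda>_. 0)"
  shows "f \<in> M \<or> (\<lambda>w. - f w) \<in> M"
proof (rule disjCI)
  assume "(\<lambda>w. - f w) \<notin> M"
  then have "coherent (adjoin M f)"
    using coherent_adjoin atoms_coherent[OF M] f by blast
  then have "adjoin M f = M"
    using M subset_adjoin[of M f] unfolding atoms_def by blast
  then show "f \<in> M"
    using mem_adjoin by metis
qed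

lemma atoms_inter_eq_if_subset:
  assumes A: "A \<in> atoms" and B: "B \<in> atoms"
    and L: "L \<subseteq> gambles" "\<And>f. f \<in> L \<Longrightarrow> (\<lambda>w. - f w) \<in> L"
    and sub: "A \<inter> L \<subseteq> B"
  shows "A \<inter> L = B \<inter> L"
proof
  show "A \<inter> L \<subseteq> B \<inter> L"
    using sub by blast
  show "B \<inter> L \<subseteq> A \<inter> L"
  proof
    fix f assume f: "f \<in> B \<inter> L"
    have "f \<in> A"
    proof (rule ccontr)
      assume "f \<notin> A"
      moreover have "f \<noteq> (\<lambda>_. 0)"
        using f coherentD(3)[OF atoms_coherent[OF B]] by blast
      ultimately have "(\<lambda>w. - f w) \<in> A"
        using atom_mem_or_uminus_mem[OF A] f L(1) by blast
      then have "(\<lambda>w. - f w) \<in> B"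
        using sub f L(2) by blast
      then have "(\<lambda>w. f w + - f w) \<in> B"
        using f coherentD(4)[OF atoms_coherent[OF B]] by blast
      then show False
        using coherentD(3)[OF atoms_coherent[OF B]] by simp
    qed
    then show "f \<in> A \<inter> L"
      using f by blast
  qed
qed

lemma closure_C_least: "D \<in> Phi \<Longrightarrow> K \<subseteq> D \<Longrightarrow> closure_C K \<subseteq> D"
  unfolding closure_C_def by blast

lemma closure_C_upper: "K \<subseteq> closure_C K"
  unfolding closure_C_def by blast

lemma extraction_subset: "D \<in> Phi \<Longrightarrow> extraction R D \<subseteq> D"
  unfolding extraction_def by (rule closure_C_least) auto

lemma atom_mem_atoms_of_extraction: "M \<in> atoms \<Longrightarrow> M \<in> atoms_of (extraction R M)"
  using extraction_subset atoms_subset_Phi by (auto simp: atoms_of_def)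

lemma extraction_eq_if_subset_atom:
  assumes M: "M \<in> atoms" and M': "M' \<in> atoms" and sub: "extraction R M \<subseteq> M'"
  shows "extraction R M = extraction R M'"
proof -
  have "measurable_gambles R \<subseteq> gambles"
    by (auto simp: measurable_gambles_def)
  moreover have "M \<inter> measurable_gambles R \<subseteq> M'"
    using closure_C_upper sub unfolding extraction_def by blast
  ultimately have "M \<inter> measurable_gambles R = M' \<inter> measurable_gambles R"
    using atoms_inter_eq_if_subset[OF M M' _ measurable_gambles_uminus] by blast
  then show ?thesis
    by (simp add: extraction_def)
qed

lemma extraction_eq_iff_mem_atoms_of:
  assumes "M \<in> atoms" "M' \<in> atoms"
  shows "extraction R M = extraction R M' \<longleftrightarrow> M' \<in> atoms_of (extraction R M)"
  using assms extraction_eq_if_subset_atom atom_mem_atoms_of_extraction[of M' R]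
  by (auto simp: atoms_of_def)

lemma atom_equiv_iff_mem_atoms_of:
  assumes M: "M \<in> atoms" and M': "M' \<in> atoms"
  shows "atom_equiv R M M' \<longleftrightarrow> M' \<in> atoms_of (extraction R M)"
proof
  assume "atom_equiv R M M'"
  then obtain N where N: "N \<in> atoms" "M \<in> atoms_of (extraction R N)" "M' \<in> atoms_of (extraction R N)"
    unfolding atom_equiv_def by blast
  then have "extraction R N = extraction R M"
    using extraction_eq_iff_mem_atoms_of[OF N(1) M] by blast
  then show "M' \<in> atoms_of (extraction R M)"
    using N(3) by simp
next
  assume "M' \<in> atoms_of (extraction R M)"
  then show "atom_equiv R M M'"
    unfolding atom_equiv_def using M atom_mem_atoms_of_extraction by blast
qed

lemma atoms_of_subset_atoms: "atoms_of D \<subseteq> atoms"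
  by (auto simp: atoms_of_def)

lemma atoms_partition_le_iff:
  "atoms_partition_le Rx Ry \<longleftrightarrow>
     (\<forall>M\<in>atoms. atoms_of (extraction Ry M) \<subseteq> atoms_of (extraction Rx M))"
  unfolding atoms_partition_le_def
proof (intro iffI ballI subsetI impI)
  fix M M' assume le: "\<forall>M\<in>atoms. \<forall>M'\<in>atoms. atom_equiv Ry M M' \<longrightarrow> atom_equiv Rx M M'"
    and M: "M \<in> atoms" and M': "M' \<in> atoms_of (extraction Ry M)"
  then have "M' \<in> atoms"
    using atoms_of_subset_atoms by blast
  then show "M' \<in> atoms_of (extraction Rx M)"
    using le M M' atom_equiv_iff_mem_atoms_of by blast
next
  fix M M' assume "\<forall>M\<in>atoms. atoms_of (extraction Ry M) \<subseteq> atoms_of (extraction Rx M)"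
    and "M \<in> atoms" "M' \<in> atoms" "atom_equiv Ry M M'"
  then show "atom_equiv Rx M M'"
    using atom_equiv_iff_mem_atoms_of by blast
qed

theorem lemma1:
  fixes Q :: "'q set" and part :: "'q \<Rightarrow> ('a \<times> 'a) set"
  assumes "questions Q part"
  shows "(\<forall>x\<in>Q. \<forall>M\<in>atoms. \<forall>M'\<in>atoms.
            (atom_equiv (part x) M M' \<longleftrightarrow> extraction (part x) M = extraction (part x) M') \<and>
            (extraction (part x) M = extraction (part x) M' \<longleftrightarrow>
               M \<in> atoms_of (extraction (part x) M) \<and> M' \<in> atoms_of (extraction (part x) M)))
       \<and> (\<forall>x\<in>Q. \<forall>y\<in>Q. atoms_partition_le (part x) (part y) \<longleftrightarrow>
            (\<forall>M\<in>atoms. atoms_of (extraction (part y) M) \<subseteq> atoms_of (extraction (part x) M)))"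
  using atom_equiv_iff_mem_atoms_of extraction_eq_iff_mem_atoms_of
    atom_mem_atoms_of_extraction atoms_partition_le_iff
  by blast

end
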